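(* If $\Gamma$ is a symmetric bimatrix game with $m=2$ strategies per player, then $\mathrm{conv}(\mathrm{Nash}_{\mathrm{sym}}(\Gamma))=\mathrm{XE}_{\mathrm{sym}}(\Gamma)$.
   Context: A symmetric bimatrix game: two players with the same finite strategy set $C_1$ and utilities with $u_1(s_1,s_2)=u_2(s_2,s_1)$. Distributions on $C_1\times C_1$ are identified with nonnegative matrices summing to one. A correlated equilibrium is a distribution $\pi$ with $\sum_{s_{-i}}[u_i(t_i,s_{-i})-u_i(s)]\pi(s)\le0$ for each player $i$ and all $s_i,t_i$. $\mathrm{Nash}_{\mathrm{sym}}(\Gamma)$ is the set of symmetric Nash equilibria, viewed as matrices $xx^T$ ($x$ a probability vector) that are correlated equilibria. $\mathrm{XE}_{\mathrm{sym}}(\Gamma)$ (exchangeable equilibria) is the set of correlated equilibria lying in $\mathrm{conv}\{xx^T:x\text{ a probability vector on }C_1\}$. *)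

theory Defs
  imports "HOL-Analysis.Analysis"
begin

text \<open>The game is given by player 1's utility u, u1(s1,s2) = u s1 s2; player 2's
  utility is then forced by symmetry: u2(s1,s2) = u1(s2,s1) = u s2 s1.
  Distributions on C1 x C1 are matrices P :: real^'a^'a, entry P$s1$s2.\<close>

definition util1 :: "('a \<Rightarrow> 'a \<Rightarrow> real) \<Rightarrow> 'a \<Rightarrow> 'a \<Rightarrow> real" where
  "util1 u s1 s2 = u s1 s2"

definition util2 :: "('a \<Rightarrow> 'a \<Rightarrow> real) \<Rightarrow> 'a \<Rightarrow> 'a \<Rightarrow> real" where
  "util2 u s1 s2 = u s2 s1"

definition prob_vec :: "real^'a::finite \<Rightarrow> bool" where
  "prob_vec x \<longleftrightarrow> (\<forall>i. 0 \<le> x$i) \<and> (\<Sum>i\<in>UNIV. x$i) = 1"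

definition distribution :: "real^'a::finite^'a \<Rightarrow> bool" where
  "distribution P \<longleftrightarrow> (\<forall>i j. 0 \<le> P$i$j) \<and> (\<Sum>i\<in>UNIV. \<Sum>j\<in>UNIV. P$i$j) = 1"

definition outer_self :: "real^'a::finite \<Rightarrow> real^'a^'a" where
  "outer_self x = (\<chi> i j. x$i * x$j)"

definition correlated_eq :: "('a::finite \<Rightarrow> 'a \<Rightarrow> real) \<Rightarrow> real^'a^'a \<Rightarrow> bool" where
  "correlated_eq u P \<longleftrightarrow> distribution P \<and>
     (\<forall>s1 t1. (\<Sum>s2\<in>UNIV. (util1 u t1 s2 - util1 u s1 s2) * P$s1$s2) \<le> 0) \<and>
     (\<forall>s2 t2. (\<Sum>s1\<in>UNIV. (util2 u s1 t2 - util2 u s1 s2) * P$s1$s2) \<le> 0)"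

definition Nash_sym :: "('a::finite \<Rightarrow> 'a \<Rightarrow> real) \<Rightarrow> (real^'a^'a) set" where
  "Nash_sym u = {outer_self x | x. prob_vec x \<and> correlated_eq u (outer_self x)}"

definition XE_sym :: "('a::finite \<Rightarrow> 'a \<Rightarrow> real) \<Rightarrow> (real^'a^'a) set" where
  "XE_sym u = {P. correlated_eq u P \<and> P \<in> convex hull {outer_self x | x. prob_vec x}}"

end

theory Submission
  imports Defs
begin

text \<open>Every point of the convex hull of the matrices \<open>x x\<^sup>T\<close> is symmetric and positive
  semidefinite; for two strategies it is \<open>[[a, c], [c, b]]\<close> with \<open>c\<^sup>2 \<le> a b\<close>, and the
  correlated-equilibrium constraints become two linear inequalities in the gains \<open>g\<^sub>0, g\<^sub>1\<close>
  of deviating to the second strategy against each pure strategy. If \<open>c = 0\<close>, the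
  distribution mixes the two pure symmetric profiles and gives positive weight only to those
  that are equilibria. If \<open>c > 0\<close> and the game is not trivial, \<open>g\<^sub>0\<close> and \<open>g\<^sub>1\<close> have
  opposite signs, so there is a mixed symmetric equilibrium \<open>m\<close>, and the distribution is
  \<open>\<alpha> m m\<^sup>T + \<beta> e\<^sub>0 e\<^sub>0\<^sup>T + \<gamma> e\<^sub>1 e\<^sub>1\<^sup>T\<close> with \<open>\<beta>, \<gamma> \<ge> 0\<close>: in a coordination game both pure
  profiles are equilibria, and in an anti-coordination game positive semidefiniteness forces
  \<open>\<beta> = \<gamma> = 0\<close>.\<close>

definition positive_semidefinite :: "real^'n^'n \<Rightarrow> bool" where
  "positive_semidefinite P \<longleftrightarrow> (\<forall>v. 0 \<le> v \<bullet> (P *v v))"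

lemma convex_symmetric_positive_semidefinite:
  "convex {P::real^'n^'n. transpose P = P \<and> positive_semidefinite P}"
proof (rule convexI)
  fix X Y :: "real^'n^'n" and a b :: real
  assume "X \<in> {P. transpose P = P \<and> positive_semidefinite P}"
    and "Y \<in> {P. transpose P = P \<and> positive_semidefinite P}"
    and "0 \<le> a" "0 \<le> b" "a + b = 1"
  then show "a *\<^sub>R X + b *\<^sub>R Y \<in> {P. transpose P = P \<and> positive_semidefinite P}"
    by (auto simp: positive_semidefinite_def transpose_def vec_eq_iff matrix_vector_mult_add_rdistrib
        scaleR_matrix_vector_assoc[symmetric] inner_add_right)
qed

lemma outer_self_nth [simp]: "outer_self x $ i $ j = x$i * x$j"
  by (simp add: outer_self_def)

lemma outer_self_mult_vec: "outer_self x *v v = (x \<bullet> v) *\<^sub>R x"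
  by (simp add: vec_eq_iff outer_self_def matrix_vector_mult_def inner_vec_def sum_distrib_left
      algebra_simps)

lemma symmetric_positive_semidefinite_outer_self:
  "transpose (outer_self x) = outer_self x \<and> positive_semidefinite (outer_self x)"
  by (simp add: positive_semidefinite_def outer_self_mult_vec inner_commute)
    (simp add: transpose_def outer_self_def vec_eq_iff mult.commute)

lemma symmetric_positive_semidefinite_if_in_convex_hull_outer_self:
  assumes "P \<in> convex hull {outer_self x | x. prob_vec x}"
  shows "transpose P = P \<and> positive_semidefinite P"
proof -
  have "convex hull {outer_self x | x. prob_vec x} \<subseteq> {P. transpose P = P \<and> positive_semidefinite P}"
    using symmetric_positive_semidefinite_outer_self
    by (intro hull_minimal convex_symmetric_positive_semidefinite) auto
  then show ?thesis using assms by blast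
qed

lemma convex_correlated_eq: "convex {P. correlated_eq u P}"
proof (rule convexI)
  fix X Y :: "real^'a^'a" and a b :: real
  assume X: "X \<in> {P. correlated_eq u P}" and Y: "Y \<in> {P. correlated_eq u P}"
    and ab: "0 \<le> a" "0 \<le> b" "a + b = 1"
  have lin: "(\<Sum>s\<in>UNIV. f s * (a * g s + b * h s))
      = a * (\<Sum>s\<in>UNIV. f s * g s) + b * (\<Sum>s\<in>UNIV. f s * h s)" for f g h :: "'a \<Rightarrow> real"
    by (simp add: algebra_simps sum.distrib sum_distrib_left)
  have "(\<Sum>i\<in>UNIV. \<Sum>j\<in>UNIV. a * X$i$j + b * Y$i$j)
      = a * (\<Sum>i\<in>UNIV. \<Sum>j\<in>UNIV. X$i$j) + b * (\<Sum>i\<in>UNIV. \<Sum>j\<in>UNIV. Y$i$j)"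
    by (simp add: sum.distrib sum_distrib_left)
  then show "a *\<^sub>R X + b *\<^sub>R Y \<in> {P. correlated_eq u P}"
    using X Y ab unfolding mem_Collect_eq correlated_eq_def distribution_def
    by (simp add: lin mult_nonneg_nonpos add_nonpos_nonpos)
qed

lemma convex_XE_sym: "convex (XE_sym u)"
proof -
  have "XE_sym u = {P. correlated_eq u P} \<inter> convex hull {outer_self x | x. prob_vec x}"
    unfolding XE_sym_def by blast
  then show ?thesis by (simp add: convex_Int convex_correlated_eq)
qed

lemma Nash_sym_subset_XE_sym: "Nash_sym u \<subseteq> XE_sym u"
  unfolding Nash_sym_def XE_sym_def by (auto intro: hull_inc)

lemma convex_hull_Nash_sym_subset_XE_sym: "convex hull Nash_sym u \<subseteq> XE_sym u"
  by (intro hull_minimal Nash_sym_subset_XE_sym convex_XE_sym)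

lemma nonneg_quadratic_form_imp_det_nonneg:
  fixes a b c :: real
  assumes "\<And>s t. 0 \<le> s * s * a + 2 * s * t * c + t * t * b"
  shows "c\<^sup>2 \<le> a * b"
proof -
  have "0 \<le> (a + b) * (a * b - c\<^sup>2)"
    using assms[of c "-a"] assms[of b "-c"] by (simp add: algebra_simps power2_eq_square)
  moreover have "0 \<le> a" "0 \<le> b" "\<bar>2 * c\<bar> \<le> a + b"
    using assms[of 1 0] assms[of 0 1] assms[of 1 1] assms[of 1 "-1"] by simp_all
  ultimately show ?thesis
    by (cases "a + b = 0") (simp_all add: zero_le_mult_iff)
qed

lemma opposite_signs_if_off_diagonal_pos:
  fixes a b c g0 g1 :: real
  assumes "0 < c" "c\<^sup>2 \<le> a * b" "0 \<le> a" "0 \<le> b"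
    "g0 * a + g1 * c \<le> 0" "0 \<le> g0 * c + g1 * b" "g0 \<noteq> 0 \<or> g1 \<noteq> 0"
  shows "g0 * g1 < 0"
proof -
  have "0 < a * b" using assms(1,2) by (meson order_less_le_trans zero_less_power)
  then have a: "0 < a" and b: "0 < b" using assms(3,4) by (auto simp: zero_less_mult_iff)
  show ?thesis
  proof (cases "0 \<le> g0")
    case True
    have "0 \<le> g0 * a" using True a by simp
    then have "g1 * c \<le> 0" using assms(5) by simp
    then have "g1 \<le> 0" using assms(1) by (simp add: mult_le_0_iff)
    moreover have "g1 \<noteq> 0"
    proof
      assume "g1 = 0"
      then have "g0 * a \<le> 0" using assms(5) by simp
      then have "g0 = 0" using True a by (simp add: mult_le_0_iff)
      then show False using assms(7) \<open>g1 = 0\<close> by simp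
    qed
    ultimately have "g1 < 0" by simp
    then have "g1 * b < 0" using b by (simp add: mult_neg_pos)
    then have "0 < g0 * c" using assms(6) by simp
    then have "0 < g0" using assms(1) by (simp add: zero_less_mult_iff)
    then show ?thesis using \<open>g1 < 0\<close> by (simp add: mult_pos_neg)
  next
    case False
    then have "g0 * c < 0" using assms(1) by (simp add: mult_neg_pos)
    then have "0 < g1 * b" using assms(6) by simp
    then have "0 < g1" using b by (simp add: zero_less_mult_iff)
    then show ?thesis using False by (simp add: mult_neg_pos)
  qed
qed

lemma nonneg_pair_if_positive_combination_nonneg:
  fixes x y s t S :: real
  assumes "0 < s" "0 < t" "0 \<le> s * x + t * y" "0 \<le> S * x" "0 \<le> S * y" "S \<noteq> 0"
  shows "0 \<le> x" "0 \<le> y" "S < 0 \<Longrightarrow> x = 0 \<and> y = 0"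
proof -
  have "x = 0 \<and> y = 0" if "S < 0"
  proof -
    have "x \<le> 0" "y \<le> 0" using assms(4,5) that by (simp_all add: zero_le_mult_iff)
    then have "s * x \<le> 0" "t * y \<le> 0" using assms(1,2) by (simp_all add: mult_nonneg_nonpos)
    then have "s * x = 0" "t * y = 0" using assms(3) by linarith+
    then show ?thesis using assms(1,2) by simp
  qed
  moreover have "0 \<le> x \<and> 0 \<le> y" if "0 < S" using assms(4,5) that by (simp add: zero_le_mult_iff)
  ultimately show "0 \<le> x" "0 \<le> y" "S < 0 \<Longrightarrow> x = 0 \<and> y = 0" using assms(6) by fastforce+
qed

lemma convex_hull_3_supported:
  assumes "0 \<le> \<alpha>" "0 \<le> \<beta>" "0 \<le> \<gamma>" "\<alpha> + \<beta> + \<gamma> = 1"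
    and "0 < \<alpha> \<Longrightarrow> x \<in> S" "0 < \<beta> \<Longrightarrow> y \<in> S" "0 < \<gamma> \<Longrightarrow> z \<in> S"
  shows "\<alpha> *\<^sub>R x + \<beta> *\<^sub>R y + \<gamma> *\<^sub>R z \<in> convex hull S"
proof -
  have "0 < \<alpha> \<or> 0 < \<beta> \<or> 0 < \<gamma>" using assms(1-4) by linarith
  then obtain w where "w \<in> S" using assms(5-7) by blast
  \<comment> \<open>A point with weight zero may be replaced by any point of \<open>S\<close>.\<close>
  define pick where "pick c v = (if 0 < c then v else w)" for c :: real and v
  have pick: "pick \<alpha> x \<in> S" "pick \<beta> y \<in> S" "pick \<gamma> z \<in> S"
    using \<open>w \<in> S\<close> assms(5-7) by (simp_all add: pick_def)
  have scale: "c *\<^sub>R v = c *\<^sub>R pick c v" if "0 \<le> c" for c v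
    using that by (cases "c = 0") (simp_all add: pick_def)
  have "\<alpha> *\<^sub>R pick \<alpha> x + \<beta> *\<^sub>R pick \<beta> y + \<gamma> *\<^sub>R pick \<gamma> z \<in> convex hull {pick \<alpha> x, pick \<beta> y, pick \<gamma> z}"
    unfolding convex_hull_3 using assms(1-4) by blast
  also have "\<dots> \<subseteq> convex hull S"
    using pick by (intro hull_mono) auto
  finally show ?thesis using scale assms(1-3) by metis
qed

locale two_strategies =
  fixes s0 s1 :: "'a::finite"
  assumes UNIV_eq: "UNIV = {s0, s1}" and distinct: "s0 \<noteq> s1"
begin

lemma sum_UNIV: "sum f UNIV = f s0 + f s1"
  using distinct by (simp add: UNIV_eq)

lemma all_UNIV: "(\<forall>s. Q s) \<longleftrightarrow> Q s0 \<and> Q s1"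
  by (metis UNIV_I UNIV_eq insertE singletonD)

definition gain :: "('a \<Rightarrow> 'a \<Rightarrow> real) \<Rightarrow> 'a \<Rightarrow> real" where
  "gain u s = u s1 s - u s0 s"

lemma correlated_eq_symmetric_iff:
  assumes "P$s1$s0 = P$s0$s1"
  shows "correlated_eq u P \<longleftrightarrow> 0 \<le> P$s0$s0 \<and> 0 \<le> P$s0$s1 \<and> 0 \<le> P$s1$s1
    \<and> P$s0$s0 + 2 * P$s0$s1 + P$s1$s1 = 1
    \<and> gain u s0 * P$s0$s0 + gain u s1 * P$s0$s1 \<le> 0
    \<and> 0 \<le> gain u s0 * P$s0$s1 + gain u s1 * P$s1$s1"
  using assms
  unfolding correlated_eq_def distribution_def util1_def util2_def gain_def sum_UNIV all_UNIV
  by (auto simp: algebra_simps)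

definition mixed :: "real \<Rightarrow> real^'a" where
  "mixed p = (\<chi> s. if s = s0 then p else 1 - p)"

lemma mixed_nth [simp]: "mixed p $ s0 = p" "mixed p $ s1 = 1 - p"
  using distinct by (simp_all add: mixed_def)

lemma prob_vec_mixed: "0 \<le> p \<Longrightarrow> p \<le> 1 \<Longrightarrow> prob_vec (mixed p)"
  unfolding prob_vec_def sum_UNIV all_UNIV by simp

lemma mixed_in_Nash_sym:
  assumes "0 \<le> p" "p \<le> 1"
    and "0 < p \<Longrightarrow> gain u s0 * p + gain u s1 * (1 - p) \<le> 0"
    and "p < 1 \<Longrightarrow> 0 \<le> gain u s0 * p + gain u s1 * (1 - p)"
  shows "outer_self (mixed p) \<in> Nash_sym u"
proof -
  let ?g = "gain u s0 * p + gain u s1 * (1 - p)"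
  have "p * ?g \<le> 0" using assms(1,3) by (cases "p = 0") (auto simp: mult_nonneg_nonpos)
  moreover have "0 \<le> (1 - p) * ?g" using assms(2,4) by (cases "p = 1") auto
  moreover have "0 \<le> p * p" "0 \<le> p * (1 - p)" "0 \<le> (1 - p) * (1 - p)" using assms(1,2) by simp_all
  ultimately have "correlated_eq u (outer_self (mixed p))"
    by (subst correlated_eq_symmetric_iff) (simp_all add: algebra_simps)
  then show ?thesis unfolding Nash_sym_def using prob_vec_mixed[OF assms(1,2)] by blast
qed

lemma mixed_1_in_Nash_sym: "gain u s0 \<le> 0 \<Longrightarrow> outer_self (mixed 1) \<in> Nash_sym u"
  by (intro mixed_in_Nash_sym) simp_all

lemma mixed_0_in_Nash_sym: "0 \<le> gain u s1 \<Longrightarrow> outer_self (mixed 0) \<in> Nash_sym u"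
  by (intro mixed_in_Nash_sym) simp_all

lemma outer_self_in_Nash_sym_if_indifferent:
  assumes "gain u s0 = 0" "gain u s1 = 0" "prob_vec x"
  shows "outer_self x \<in> Nash_sym u"
proof -
  have "0 \<le> x$s0" "0 \<le> x$s1" "x$s0 + x$s1 = 1"
    using assms(3) unfolding prob_vec_def sum_UNIV by auto
  then have "correlated_eq u (outer_self x)"
    using assms(1,2) by (subst correlated_eq_symmetric_iff) (simp_all, algebra)
  then show ?thesis unfolding Nash_sym_def using assms(3) by blast
qed

lemma quadratic_form_nonneg:
  assumes "positive_semidefinite P" "P$s1$s0 = P$s0$s1"
  shows "0 \<le> s * s * P$s0$s0 + 2 * s * t * P$s0$s1 + t * t * P$s1$s1"
  using assms(1)[unfolded positive_semidefinite_def, rule_format, of "\<chi> i. if i = s0 then s else t"]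
    assms(2) distinct
  by (simp add: inner_vec_def matrix_vector_mult_def sum_UNIV algebra_simps)

lemma decompose_symmetric:
  assumes "0 < p" "p < 1" "P$s1$s0 = P$s0$s1"
  defines "\<alpha> \<equiv> P$s0$s1 / (p * (1 - p))"
    and "\<beta> \<equiv> (P$s0$s0 * (1 - p) - P$s0$s1 * p) / (1 - p)"
    and "\<gamma> \<equiv> (P$s1$s1 * p - P$s0$s1 * (1 - p)) / p"
  shows "P = \<alpha> *\<^sub>R outer_self (mixed p) + \<beta> *\<^sub>R outer_self (mixed 1) + \<gamma> *\<^sub>R outer_self (mixed 0)"
    and "\<alpha> + \<beta> + \<gamma> = P$s0$s0 + 2 * P$s0$s1 + P$s1$s1"
proof -
  define q where "q = 1 - p"
  have "p \<noteq> 0" "q \<noteq> 0" "p + q = 1" using assms(1,2) by (simp_all add: q_def)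
  then have "\<alpha> * (p * p) + \<beta> = P$s0$s0" "\<alpha> * (p * q) = P$s0$s1" "\<alpha> * (q * p) = P$s0$s1"
    "\<alpha> * (q * q) + \<gamma> = P$s1$s1"
    unfolding \<alpha>_def \<beta>_def \<gamma>_def q_def[symmetric] by (simp_all add: field_simps)
  moreover have "\<alpha> + \<beta> + \<gamma> = P$s0$s0 + 2 * P$s0$s1 + P$s1$s1"
  proof -
    have "\<alpha> + \<beta> + \<gamma> = P$s0$s0 + P$s1$s1 + \<alpha> * (1 - p * p - q * q)"
      using \<open>p \<noteq> 0\<close> \<open>q \<noteq> 0\<close> unfolding \<alpha>_def \<beta>_def \<gamma>_def q_def[symmetric]
      by (simp add: field_simps)
    also have "1 - p * p - q * q = 2 * (p * q)"
      using \<open>p + q = 1\<close> by algebra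
    finally show ?thesis using \<open>\<alpha> * (p * q) = P$s0$s1\<close> by simp
  qed
  ultimately
  show "P = \<alpha> *\<^sub>R outer_self (mixed p) + \<beta> *\<^sub>R outer_self (mixed 1) + \<gamma> *\<^sub>R outer_self (mixed 0)"
    and "\<alpha> + \<beta> + \<gamma> = P$s0$s0 + 2 * P$s0$s1 + P$s1$s1"
    using assms(3) unfolding vec_eq_iff all_UNIV q_def by simp_all
qed

lemma in_convex_hull_Nash_sym_if_opposite_gains:
  assumes sym: "P$s1$s0 = P$s0$s1" and CE: "correlated_eq u P" and psd: "positive_semidefinite P"
    and opposite: "gain u s0 * gain u s1 < 0"
  shows "P \<in> convex hull Nash_sym u"
proof -
  define a b c where "a = P$s0$s0" and "b = P$s1$s1" and "c = P$s0$s1"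
  define g0 g1 where "g0 = gain u s0" and "g1 = gain u s1"
  define S where "S = g1 - g0"
  \<comment> \<open>Against \<open>mixed p\<close> both pure strategies are equally good.\<close>
  define p where "p = g1 / S"
  have "S \<noteq> 0" using opposite by (auto simp: S_def g0_def g1_def)
  then have g0: "g0 = - S * (1 - p)" and g1: "g1 = S * p"
    by (simp_all add: p_def S_def field_simps)
  have p: "0 < p" "p < 1"
    using opposite unfolding p_def S_def g0_def[symmetric] g1_def[symmetric]
    by (auto simp: mult_less_0_iff divide_less_eq zero_less_divide_iff)
  have c0: "0 \<le> c" and sum1: "a + 2 * c + b = 1"
    and dev0: "0 \<le> S * (a * (1 - p) - c * p)" and dev1: "0 \<le> S * (b * p - c * (1 - p))"
    using CE sym unfolding correlated_eq_symmetric_iff[OF sym] a_def b_def c_def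
    by (auto simp: g0_def[symmetric] g1_def[symmetric] g0 g1 algebra_simps)
  \<comment> \<open>The quadratic form at \<open>(1 - p, -p)\<close> rules out slack when \<open>S < 0\<close>.\<close>
  have quad: "0 \<le> (1 - p) * (a * (1 - p) - c * p) + p * (b * p - c * (1 - p))"
    using quadratic_form_nonneg[OF psd sym, of "1 - p" "- p"]
    by (simp add: a_def b_def c_def algebra_simps)
  have "0 < 1 - p" using p by simp
  note slack = nonneg_pair_if_positive_combination_nonneg[OF this p(1) quad dev0 dev1 \<open>S \<noteq> 0\<close>]
  have coordination: "g0 < 0 \<and> 0 < g1" if "0 < a * (1 - p) - c * p \<or> 0 < b * p - c * (1 - p)"
  proof -
    have "0 < S" using slack(3) that \<open>S \<noteq> 0\<close> by fastforce
    then show ?thesis using p unfolding g0 g1 by (simp add: mult_pos_neg)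
  qed
  have "outer_self (mixed 1) \<in> Nash_sym u" if "0 < a * (1 - p) - c * p"
    using coordination that by (simp add: g0_def mixed_1_in_Nash_sym)
  moreover have "outer_self (mixed 0) \<in> Nash_sym u" if "0 < b * p - c * (1 - p)"
    using coordination that by (simp add: g1_def mixed_0_in_Nash_sym)
  moreover have "outer_self (mixed p) \<in> Nash_sym u"
    using p by (intro mixed_in_Nash_sym) (simp_all add: g0_def[symmetric] g1_def[symmetric] g0 g1)
  ultimately have "(c / (p * (1 - p))) *\<^sub>R outer_self (mixed p)
      + ((a * (1 - p) - c * p) / (1 - p)) *\<^sub>R outer_self (mixed 1)
      + ((b * p - c * (1 - p)) / p) *\<^sub>R outer_self (mixed 0) \<in> convex hull Nash_sym u"
    using p c0 slack(1,2) decompose_symmetric(2)[OF p sym] sum1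
    by (intro convex_hull_3_supported) (auto simp: a_def b_def c_def zero_less_divide_iff)
  then show ?thesis
    using decompose_symmetric(1)[OF p sym] by (simp add: a_def b_def c_def)
qed

lemma in_convex_hull_Nash_sym_if_diagonal:
  assumes "P$s0$s1 = 0" "P$s1$s0 = 0" and CE: "correlated_eq u P"
  shows "P \<in> convex hull Nash_sym u"
proof -
  have "0 \<le> P$s0$s0" "0 \<le> P$s1$s1" "P$s0$s0 + P$s1$s1 = 1"
    and "0 < P$s0$s0 \<Longrightarrow> gain u s0 \<le> 0" "0 < P$s1$s1 \<Longrightarrow> 0 \<le> gain u s1"
    using CE assms(1,2) unfolding correlated_eq_symmetric_iff[OF assms(2)[folded assms(1)]]
    by (auto simp: mult_le_0_iff zero_le_mult_iff)
  then have "0 *\<^sub>R outer_self (mixed (1/2)) + P$s0$s0 *\<^sub>R outer_self (mixed 1)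
      + P$s1$s1 *\<^sub>R outer_self (mixed 0) \<in> convex hull Nash_sym u"
    by (intro convex_hull_3_supported) (auto intro: mixed_1_in_Nash_sym mixed_0_in_Nash_sym)
  moreover have "P = 0 *\<^sub>R outer_self (mixed (1/2)) + P$s0$s0 *\<^sub>R outer_self (mixed 1)
      + P$s1$s1 *\<^sub>R outer_self (mixed 0)"
    using decompose_symmetric[of "1/2" P] assms(1,2) by simp
  ultimately show ?thesis by simp
qed

lemma XE_sym_subset_convex_hull_Nash_sym:
  fixes u :: "'a \<Rightarrow> 'a \<Rightarrow> real"
  shows "XE_sym u \<subseteq> convex hull Nash_sym u"
proof
  fix P assume "P \<in> XE_sym u"
  then have CE: "correlated_eq u P" and H: "P \<in> convex hull {outer_self x | x. prob_vec x}"
    unfolding XE_sym_def by auto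
  from symmetric_positive_semidefinite_if_in_convex_hull_outer_self[OF H]
  have sym: "P$s1$s0 = P$s0$s1" and psd: "positive_semidefinite P"
    by (auto simp: transpose_def vec_eq_iff)
  have det: "(P$s0$s1)\<^sup>2 \<le> P$s0$s0 * P$s1$s1"
    using quadratic_form_nonneg[OF psd sym] by (rule nonneg_quadratic_form_imp_det_nonneg)
  consider "gain u s0 = 0 \<and> gain u s1 = 0" | "gain u s0 * gain u s1 < 0" | "P$s0$s1 = 0"
    using CE opposite_signs_if_off_diagonal_pos[OF _ det] unfolding correlated_eq_symmetric_iff[OF sym]
    by (metis order_le_less)
  then show "P \<in> convex hull Nash_sym u"
  proof cases
    case 1
    then have "{outer_self x | x. prob_vec x} \<subseteq> Nash_sym u"
      using outer_self_in_Nash_sym_if_indifferent by blast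
    then show ?thesis using H hull_mono by blast
  next
    case 2
    then show ?thesis by (rule in_convex_hull_Nash_sym_if_opposite_gains[OF sym CE psd])
  next
    case 3
    then show ?thesis using sym CE by (intro in_convex_hull_Nash_sym_if_diagonal) simp_all
  qed
qed

end

theorem theorem3p6:
  fixes u :: "'a::finite \<Rightarrow> 'a \<Rightarrow> real"
  assumes "CARD('a) = 2"
  shows "convex hull (Nash_sym u) = XE_sym u"
proof -
  obtain s0 s1 :: 'a where "UNIV = {s0, s1}" "s0 \<noteq> s1"
    using assms card_2_iff by metis
  then interpret two_strategies s0 s1 by unfold_locales
  show ?thesis
    using convex_hull_Nash_sym_subset_XE_sym XE_sym_subset_convex_hull_Nash_sym by (rule subset_antisym)
qed

end
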